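(* For any $h\in BV([0,1];\mathbb R^d)$ and $g\in D([0,1];\mathbb R^d)$, $$\int_0^1|g(s)-h(s)|ds\le 2d(\operatorname{Var}(h)-|h(0)|+1)\rho_2(g,h)+\pi d\,\rho_2^2(g,h)$$ and $$\int_0^1|g(s)-h(s)|ds\le 2d(\operatorname{Var}(h)+1)\rho_2'(g,h)+\pi d\,(\rho_2')^2(g,h).$$
   Context: $D([0,1];\mathbb R^d)$ is the set of càdlàg functions $[0,1]\to\mathbb R^d$; $|\cdot|$ is the Euclidean norm. For $h\in D$ and finite $\mathbf t\subset(0,1]$, $h^{\mathbf t}$ is the continuous function linear between consecutive points of $\mathbf t\cup\{0,1\}$ with $h^{\mathbf t}(0)=0$, $h^{\mathbf t}(s)=h(s)$ for $s\in\mathbf t\cup\{1\}$; $\operatorname{Var}(h):=\sup_{\mathbf t}\int_0^1|(h^{\mathbf t})'|ds$ over finite $\mathbf t\subset(0,1]$, and $BV=\{h\in D:\operatorname{Var}(h)<\infty\}$. Completed graph: $\Gamma h:=\{(t,x)\in[0,1]\times\mathbb R^d: x\in[h(t-),h(t)]\}$ with the convention $h(0-):=h(0)$ ($[a,b]$ the line segment); modified completed graph $\Gamma'h$: the same but with the convention $h(0-):=0$ (so $\Gamma'h=\Gamma h\cup(\{0\}\times[0,h(0)])$). $\rho_2(g,h)$ is the Hausdorff distance between $\Gamma g$ and $\Gamma h$ in $\mathbb R^{d+1}$, and $\rho_2'(g,h)$ is the Hausdorff distance between $\Gamma'g$ and $\Gamma'h$. *)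

theory Defs
  imports "HOL-Analysis.Analysis"
begin

text \<open>Functions [0,1] -> R^d are modelled as real => real^'d; only values on [0,1] matter.\<close>

definition cadlag :: "(real \<Rightarrow> real^'d) \<Rightarrow> bool" where
  "cadlag h \<longleftrightarrow>
     (\<forall>t\<in>{0..<1}. (h \<longlongrightarrow> h t) (at_right t)) \<and>
     (\<forall>t\<in>{0<..1}. \<exists>l. (h \<longlongrightarrow> l) (at_left t))"

definition lefts :: "(real \<Rightarrow> real^'d) \<Rightarrow> real \<Rightarrow> real^'d" where
  "lefts h t = (if t = 0 then h 0 else Lim (at_left t) h)"

definition lefts' :: "(real \<Rightarrow> real^'d) \<Rightarrow> real \<Rightarrow> real^'d" where
  "lefts' h t = (if t = 0 then 0 else Lim (at_left t) h)"

text \<open>Completed graph and modified completed graph, as subsets of R x R^d (Euclidean norm on pairs).\<close>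
definition cgraph :: "(real \<Rightarrow> real^'d) \<Rightarrow> ((real \<times> (real^'d)) set)" where
  "cgraph h = {(t, x). t \<in> {0..1} \<and> x \<in> closed_segment (lefts h t) (h t)}"

definition cgraph' :: "(real \<Rightarrow> real^'d) \<Rightarrow> ((real \<times> (real^'d)) set)" where
  "cgraph' h = {(t, x). t \<in> {0..1} \<and> x \<in> closed_segment (lefts' h t) (h t)}"

text \<open>Hausdorff distance between (nonempty, bounded) subsets of a metric space.\<close>
definition hausdist :: "'a::metric_space set \<Rightarrow> 'a set \<Rightarrow> real" where
  "hausdist S T = max (SUP x\<in>S. infdist x T) (SUP y\<in>T. infdist y S)"

definition rho2 :: "(real \<Rightarrow> real^'d) \<Rightarrow> (real \<Rightarrow> real^'d) \<Rightarrow> real" where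
  "rho2 g h = hausdist (cgraph g) (cgraph h)"

definition rho2' :: "(real \<Rightarrow> real^'d) \<Rightarrow> (real \<Rightarrow> real^'d) \<Rightarrow> real" where
  "rho2' g h = hausdist (cgraph' g) (cgraph' h)"

text \<open>The piecewise linear interpolant h^t: linear between consecutive points of
  t \<union> {0,1}, h^t(0) = 0, h^t(s) = h(s) for s in t \<union> {1}; constant outside [0,1].\<close>
definition interp_pts :: "real set \<Rightarrow> real list" where
  "interp_pts T = 0 # sorted_list_of_set (insert 1 T)"

definition interp_val :: "(real \<Rightarrow> real^'d) \<Rightarrow> real set \<Rightarrow> nat \<Rightarrow> real^'d" where
  "interp_val h T i = (if i = 0 then 0 else h (interp_pts T ! i))"

definition interp :: "(real \<Rightarrow> real^'d) \<Rightarrow> real set \<Rightarrow> real \<Rightarrow> real^'d" where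
  "interp h T s =
     (let p = interp_pts T; n = length p in
      if s \<le> 0 then 0
      else if s \<ge> 1 then h 1
      else (let i = (LEAST i. Suc i < n \<and> s \<le> p ! Suc i) in
            interp_val h T i + ((s - p ! i) / (p ! Suc i - p ! i)) *\<^sub>R
                                (interp_val h T (Suc i) - interp_val h T i)))"

definition var_set :: "(real \<Rightarrow> real^'d) \<Rightarrow> real set" where
  "var_set h = {integral {0..1} (\<lambda>s. norm (vector_derivative (interp h T) (at s)))
                 | T. finite T \<and> T \<subseteq> {0<..1}}"

definition BV :: "(real \<Rightarrow> real^'d) \<Rightarrow> bool" where
  "BV h \<longleftrightarrow> cadlag h \<and> bdd_above (var_set h)"

definition Var :: "(real \<Rightarrow> real^'d) \<Rightarrow> real" where
  "Var h = Sup (var_set h)"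

end

theory Submission
  imports Defs "HOL-Library.Sublist"
begin

text \<open>
  Cut \<open>[0,1]\<close> into \<open>N\<close> cells of length \<open>1/N\<close> and let \<open>M \<approx> r N\<close>. If every point \<open>(t, g t)\<close>
  is within \<open>r\<close> of a point \<open>(t', x)\<close> of the completed graph of \<open>h\<close>, then
  \<open>|g t - h t| < r + |x - h t|\<close>, and \<open>x\<close> lies on a segment whose endpoints are values or left
  limits of \<open>h\<close> at times within \<open>r\<close> of \<open>t\<close>. Hence \<open>|x - h t|\<close> is at most the sum of the
  diameters of \<open>h\<close> on the \<open>2M + 1\<close> cells around the cell of \<open>t\<close>, plus \<open>|h 0|\<close> when \<open>x\<close> lies on
  the extra segment \<open>[0, h 0]\<close> of the modified graph, which can only happen in the first \<open>M\<close>
  cells. Integrating cell by cell counts every diameter at most \<open>2M + 1\<close> times, and the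
  diameters of \<open>h\<close> on the cells add up to at most \<open>Var h - |h 0|\<close>. Taking \<open>N\<close> large and letting \<open>r\<close>
  decrease to the Hausdorff distance gives the bounds \<open>2 (Var h - |h 0| + 1) \<rho>\<^sub>2\<close> and
  \<open>2 (Var h + 1) \<rho>\<^sub>2'\<close>, which are stronger than the claimed ones: the dimension factor is at
  least 1 and the quadratic terms are nonnegative.
\<close>

section \<open>Length of a polygonal chain\<close>

fun chain_length :: "('a \<Rightarrow> 'b::metric_space) \<Rightarrow> 'a list \<Rightarrow> real" where
  "chain_length f (x # y # xs) = dist (f x) (f y) + chain_length f (y # xs)"
| "chain_length f _ = 0"

lemma chain_length_nonneg: "0 \<le> chain_length f xs"
  by (induction f xs rule: chain_length.induct) auto

lemma chain_length_le_Cons: "chain_length f xs \<le> chain_length f (x # xs)"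
  by (cases xs) (auto simp: chain_length_nonneg)

lemma chain_length_Cons_le_Cons_Cons: "chain_length f (x # xs) \<le> chain_length f (x # y # xs)"
  by (cases xs) (auto intro: dist_triangle)

lemma chain_length_subseq:
  assumes "subseq xs ys"
  shows "chain_length f xs \<le> chain_length f ys"
proof -
  have "chain_length f xs \<le> chain_length f ys \<and> (\<forall>x. chain_length f (x # xs) \<le> chain_length f (x # ys))"
    using assms
  proof (induction rule: list_emb.induct)
    case (list_emb_Nil ys)
    then show ?case by (auto simp: chain_length_nonneg)
  next
    case (list_emb_Cons xs ys y)
    then show ?case
      using chain_length_le_Cons chain_length_Cons_le_Cons_Cons order_trans by metis
  next
    case (list_emb_Cons2 x y xs ys)
    then show ?case by simp
  qed
  then show ?thesis ..
qed

lemma chain_length_remdups_adj: "chain_length f (remdups_adj xs) = chain_length f xs"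
proof (induction xs rule: remdups_adj.induct)
  case (3 x y xs)
  then show ?case
    by (metis chain_length.simps(1) dist_self add_0 remdups_adj.simps(3) remdups_adj_Cons_alt)
qed auto

lemma chain_length_append_ge: "chain_length f xs + chain_length f ys \<le> chain_length f (xs @ ys)"
proof (induction f xs rule: chain_length.induct)
  case ("2_2" f x)
  then show ?case by (cases ys) (auto simp: chain_length_nonneg)
qed auto

lemma chain_length_concat_ge: "(\<Sum>xs\<leftarrow>xss. chain_length f xs) \<le> chain_length f (concat xss)"
  by (induction xss) (auto intro: order_trans[OF _ chain_length_append_ge])

lemma chain_length_eq_sum:
  "chain_length f xs = (\<Sum>j<length xs - 1. dist (f (xs ! j)) (f (xs ! Suc j)))"
proof (induction f xs rule: chain_length.induct)
  case (1 f x y xs)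
  then show ?case by (simp add: sum.lessThan_Suc_shift del: sum.lessThan_Suc)
qed auto

lemma sorted_imp_strict_sorted_remdups_adj: "sorted xs \<Longrightarrow> sorted_wrt (<) (remdups_adj xs)"
  by (induction xs rule: remdups_adj.induct) auto

lemma chain_length_sorted_le:
  fixes xs :: "'a::linorder list"
  assumes "sorted xs" "finite S" "set xs \<subseteq> S"
  shows "chain_length f xs \<le> chain_length f (sorted_list_of_set S)"
proof -
  have "subseq (remdups_adj xs) (sorted_list_of_set S)"
    using assms by (intro sorted_subset_imp_subseq sorted_imp_strict_sorted_remdups_adj) auto
  then show ?thesis
    using chain_length_subseq chain_length_remdups_adj by metis
qed

section \<open>Piecewise linear interpolants and the variation\<close>

lemma last_sorted_list_of_set:
  assumes "finite A" "A \<noteq> {}"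
  shows "last (sorted_list_of_set A) = Max A"
proof -
  let ?L = "sorted_list_of_set A"
  have ne: "?L \<noteq> []" using assms by simp
  have "x \<le> last ?L" if "x \<in> A" for x
  proof -
    have "x \<in> set ?L" using that assms by simp
    then obtain i where "i < length ?L" "x = ?L ! i" by (auto simp: in_set_conv_nth)
    then show ?thesis using ne by (simp add: last_conv_nth sorted_nth_mono)
  qed
  moreover have "last ?L \<in> A" using last_in_set[OF ne] assms by simp
  ultimately show ?thesis using assms by (intro Max_eqI[symmetric]) auto
qed

lemma interp_pts_strict_sorted:
  assumes "finite T" "T \<subseteq> {0<..1}"
  shows "sorted_wrt (<) (interp_pts T)"
  using assms by (auto simp: interp_pts_def simp del: sorted_list_of_set_insert_remove)

lemma interp_pts_bounds:
  assumes "finite T" "T \<subseteq> {0<..1}"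
  shows "interp_pts T ! 0 = 0" "2 \<le> length (interp_pts T)"
    "interp_pts T ! (length (interp_pts T) - 1) = 1"
proof -
  let ?L = "sorted_list_of_set (insert 1 T)"
  have ne: "?L \<noteq> []" using assms by simp
  show "interp_pts T ! 0 = 0" by (simp add: interp_pts_def)
  show "2 \<le> length (interp_pts T)" using ne by (cases ?L) (auto simp: interp_pts_def)
  have "Max (insert 1 T) = 1" using assms by (intro Max_eqI) auto
  then have "last ?L = 1"
    using assms by (simp add: last_sorted_list_of_set del: sorted_list_of_set_insert_remove)
  then show "interp_pts T ! (length (interp_pts T) - 1) = 1"
    using ne assms by (simp add: interp_pts_def last_conv_nth nth_Cons' card_gt_0_iff)
qed

lemma interp_on_piece:
  assumes T: "finite T" "T \<subseteq> {0<..1}"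
    and i: "Suc i < length (interp_pts T)"
    and s: "interp_pts T ! i < s" "s < interp_pts T ! Suc i"
  shows "interp h T s = interp_val h T i
           + ((s - interp_pts T ! i) / (interp_pts T ! Suc i - interp_pts T ! i))
             *\<^sub>R (interp_val h T (Suc i) - interp_val h T i)"
proof -
  let ?p = "interp_pts T"
  let ?n = "length ?p"
  have sorted: "sorted ?p" using interp_pts_strict_sorted[OF T] by (rule strict_sorted_imp_sorted)
  have "0 < s" using sorted_nth_mono[OF sorted, of 0 i] i s interp_pts_bounds(1)[OF T] by simp
  moreover have "s < 1"
  proof -
    have "?p ! Suc i \<le> ?p ! (?n - 1)" by (rule sorted_nth_mono[OF sorted]) (use i in auto)
    then show ?thesis using s interp_pts_bounds(3)[OF T] by simp
  qed
  moreover have "(LEAST j. Suc j < ?n \<and> s \<le> ?p ! Suc j) = i"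
  proof (rule Least_equality)
    show "Suc i < ?n \<and> s \<le> ?p ! Suc i" using i s by simp
    fix j assume j: "Suc j < ?n \<and> s \<le> ?p ! Suc j"
    show "i \<le> j"
    proof (rule ccontr)
      assume "\<not> i \<le> j"
      then have "?p ! Suc j \<le> ?p ! i" using sorted_nth_mono[OF sorted, of "Suc j" i] i by simp
      then show False using j s by simp
    qed
  qed
  ultimately show ?thesis unfolding interp_def Let_def by simp
qed

lemma norm_vector_derivative_interp:
  assumes T: "finite T" "T \<subseteq> {0<..1}"
    and i: "Suc i < length (interp_pts T)"
    and s: "interp_pts T ! i < s" "s < interp_pts T ! Suc i"
  shows "norm (vector_derivative (interp h T) (at s)) =
           dist (interp_val h T i) (interp_val h T (Suc i)) / (interp_pts T ! Suc i - interp_pts T ! i)"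
proof -
  let ?a = "interp_pts T ! i" and ?b = "interp_pts T ! Suc i"
  let ?u = "interp_val h T i" and ?w = "interp_val h T (Suc i)"
  define f where "f = (\<lambda>s. ?u + ((s - ?a) / (?b - ?a)) *\<^sub>R (?w - ?u))"
  have ab: "?a < ?b" using s by simp
  have "(f has_vector_derivative (1 / (?b - ?a)) *\<^sub>R (?w - ?u)) (at s)"
    unfolding f_def using ab by (auto intro!: derivative_eq_intros simp: divide_simps)
  then have "(interp h T has_vector_derivative (1 / (?b - ?a)) *\<^sub>R (?w - ?u)) (at s)"
  proof (rule has_vector_derivative_transform_within_open[where S = "{?a<..<?b}"])
    show "f y = interp h T y" if "y \<in> {?a<..<?b}" for y
      using interp_on_piece[OF T i, of y h] that unfolding f_def by simp
  qed (use s in auto)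
  then have "vector_derivative (interp h T) (at s) = (1 / (?b - ?a)) *\<^sub>R (?w - ?u)"
    by (rule vector_derivative_at)
  then show ?thesis using ab by (simp add: dist_norm norm_minus_commute)
qed

lemma has_integral_norm_derivative_interp_upto:
  assumes T: "finite T" "T \<subseteq> {0<..1}"
  shows "k < length (interp_pts T) \<Longrightarrow>
    ((\<lambda>s. norm (vector_derivative (interp h T) (at s))) has_integral
      (\<Sum>i<k. dist (interp_val h T i) (interp_val h T (Suc i)))) {0..interp_pts T ! k}"
proof (induction k)
  case 0
  then show ?case using interp_pts_bounds(1)[OF T] by (simp add: has_integral_refl)
next
  case (Suc k)
  let ?p = "interp_pts T"
  let ?F = "\<lambda>s. norm (vector_derivative (interp h T) (at s))"
  let ?c = "dist (interp_val h T k) (interp_val h T (Suc k))"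
  have sorted: "sorted ?p" using interp_pts_strict_sorted[OF T] by (rule strict_sorted_imp_sorted)
  have ab: "?p ! k < ?p ! Suc k"
    using sorted_wrt_nth_less[OF interp_pts_strict_sorted[OF T], of k "Suc k"] Suc.prems by simp
  have "(?F has_integral ?c) {?p ! k..?p ! Suc k}"
  proof (rule has_integral_spike_finite[of "{?p ! k, ?p ! Suc k}"])
    show "?F x = ?c / (?p ! Suc k - ?p ! k)" if "x \<in> {?p ! k..?p ! Suc k} - {?p ! k, ?p ! Suc k}" for x
      using that by (intro norm_vector_derivative_interp[OF T Suc.prems]) auto
    show "((\<lambda>x. ?c / (?p ! Suc k - ?p ! k)) has_integral ?c) {?p ! k..?p ! Suc k}"
      using has_integral_const_real[of "?c / (?p ! Suc k - ?p ! k)" "?p ! k" "?p ! Suc k"] ab by simp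
  qed simp
  moreover have "0 \<le> ?p ! k"
    using sorted_nth_mono[OF sorted, of 0 k] Suc.prems interp_pts_bounds(1)[OF T] by simp
  ultimately show ?case
    using has_integral_combine[of 0 "?p ! k" "?p ! Suc k"] Suc ab by simp
qed

lemma integral_norm_derivative_interp:
  assumes T: "finite T" "T \<subseteq> {0<..1}"
  defines "L \<equiv> sorted_list_of_set (insert 1 T)"
  shows "integral {0..1} (\<lambda>s. norm (vector_derivative (interp h T) (at s)))
           = norm (h (hd L)) + chain_length h L"
proof -
  have p: "interp_pts T = 0 # L" unfolding L_def interp_pts_def ..
  have ne: "L \<noteq> []" using T unfolding L_def by simp
  have n: "length (interp_pts T) - 1 < length (interp_pts T)" using interp_pts_bounds(2)[OF T] by simp
  have "integral {0..1} (\<lambda>s. norm (vector_derivative (interp h T) (at s)))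
      = (\<Sum>i<Suc (length L - 1). dist (interp_val h T i) (interp_val h T (Suc i)))"
    using has_integral_norm_derivative_interp_upto[OF T n, of h] interp_pts_bounds(3)[OF T] ne p
    by (simp add: integral_unique)
  also have "\<dots> = norm (h (hd L)) + chain_length h L"
  proof -
    have "interp_val h T 0 = 0" "\<And>j. interp_val h T (Suc j) = h (L ! j)"
      unfolding interp_val_def p by simp_all
    then show ?thesis
      unfolding sum.lessThan_Suc_shift using ne by (simp add: chain_length_eq_sum hd_conv_nth)
  qed
  finally show ?thesis .
qed

lemma Var_ge_chain_length:
  assumes BV: "BV h" and xs: "sorted xs" "xs \<noteq> []" "set xs \<subseteq> {0<..1}"
  shows "norm (h (hd xs)) + chain_length h xs \<le> Var h"
proof -
  define T where "T = set xs"
  define L where "L = sorted_list_of_set (insert 1 T)"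
  have T: "finite T" "T \<subseteq> {0<..1}" using xs unfolding T_def by auto
  have "hd L = Min (insert 1 T)" unfolding L_def using T by (simp add: sorted_list_of_set_nonempty)
  also have "\<dots> = hd xs"
  proof (rule Min_eqI)
    show "y \<ge> hd xs" if "y \<in> insert 1 T" for y
      using that xs unfolding T_def by (cases xs) auto
  qed (use T xs in \<open>auto simp: T_def\<close>)
  finally have hd: "hd L = hd xs" .
  have "chain_length h xs \<le> chain_length h L"
    unfolding L_def using xs T_def T by (intro chain_length_sorted_le) auto
  moreover have "integral {0..1} (\<lambda>s. norm (vector_derivative (interp h T) (at s))) \<le> Var h"
    using T BV unfolding Var_def BV_def var_set_def by (intro cSup_upper) auto
  ultimately show ?thesis using integral_norm_derivative_interp[OF T, of h] hd unfolding L_def by simp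
qed

section \<open>Boundedness of cadlag functions\<close>

lemma eventually_norm_le_of_tendsto:
  fixes f :: "'a \<Rightarrow> 'b::real_normed_vector"
  assumes "(f \<longlongrightarrow> l) F"
  shows "eventually (\<lambda>x. norm (f x) \<le> norm l + 1) F"
proof -
  have "norm (f x) \<le> norm l + 1" if "dist (f x) l < 1" for x
    using norm_triangle_sub[of "f x" l] that by (simp add: dist_norm)
  then show ?thesis using tendstoD[OF assms zero_less_one] by (rule eventually_mono[rotated])
qed

lemma cadlag_eventually_bounded:
  fixes h :: "real \<Rightarrow> real^'d"
  assumes cad: "cadlag h" and t: "t \<in> {0..1}"
  shows "\<exists>B. eventually (\<lambda>s. s \<in> {0..1} \<longrightarrow> norm (h s) \<le> B) (at t)"
proof -
  obtain B1 where B1: "eventually (\<lambda>s. s \<in> {0..1} \<longrightarrow> norm (h s) \<le> B1) (at_right t)"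
  proof (cases "t < 1")
    case True
    then have "(h \<longlongrightarrow> h t) (at_right t)" using cad t unfolding cadlag_def by auto
    from eventually_norm_le_of_tendsto[OF this]
    have "eventually (\<lambda>s. s \<in> {0..1} \<longrightarrow> norm (h s) \<le> norm (h t) + 1) (at_right t)"
      by (rule eventually_mono) simp
    then show ?thesis by (rule that)
  next
    case False
    have "eventually (\<lambda>s. s \<in> {0..1} \<longrightarrow> norm (h s) \<le> 0) (at_right t)"
      using eventually_at_right_less[of t] by (rule eventually_mono) (use False in auto)
    then show ?thesis by (rule that)
  qed
  obtain B2 where B2: "eventually (\<lambda>s. s \<in> {0..1} \<longrightarrow> norm (h s) \<le> B2) (at_left t)"
  proof (cases "0 < t")
    case True
    then have "t \<in> {0<..1}" using t by simp
    then obtain l where "(h \<longlongrightarrow> l) (at_left t)" using cad unfolding cadlag_def by blast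
    from eventually_norm_le_of_tendsto[OF this]
    have "eventually (\<lambda>s. s \<in> {0..1} \<longrightarrow> norm (h s) \<le> norm l + 1) (at_left t)"
      by (rule eventually_mono) simp
    then show ?thesis by (rule that)
  next
    case False
    have "eventually (\<lambda>s. s \<in> {0..1} \<longrightarrow> norm (h s) \<le> 0) (at_left t)"
      unfolding eventually_at_left_field using False by (intro exI[of _ "t - 1"]) auto
    then show ?thesis by (rule that)
  qed
  have "eventually (\<lambda>s. s \<in> {0..1} \<longrightarrow> norm (h s) \<le> max B1 B2) (at_left t)"
    using B2 by (rule eventually_mono) auto
  moreover have "eventually (\<lambda>s. s \<in> {0..1} \<longrightarrow> norm (h s) \<le> max B1 B2) (at_right t)"
    using B1 by (rule eventually_mono) auto
  ultimately show ?thesis unfolding eventually_at_split by blast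
qed

lemma cadlag_bounded:
  fixes h :: "real \<Rightarrow> real^'d"
  assumes cad: "cadlag h"
  shows "bounded (h ` {0..1})"
proof -
  have "\<exists>d B. 0 < d \<and> (\<forall>s\<in>{0..1}. dist s t < d \<longrightarrow> norm (h s) \<le> B)" if t: "t \<in> {0..1}" for t
  proof -
    obtain B where "eventually (\<lambda>s. s \<in> {0..1} \<longrightarrow> norm (h s) \<le> B) (at t)"
      using cadlag_eventually_bounded[OF cad t] by blast
    then obtain d where "0 < d" "\<forall>s. s \<noteq> t \<and> dist s t < d \<longrightarrow> s \<in> {0..1} \<longrightarrow> norm (h s) \<le> B"
      unfolding eventually_at by auto
    then have "\<forall>s\<in>{0..1}. dist s t < d \<longrightarrow> norm (h s) \<le> max B (norm (h t))"
      by (metis max.cobounded1 max.cobounded2 order_trans)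
    then show ?thesis using \<open>0 < d\<close> by blast
  qed
  then obtain d B where dB: "\<And>t. t \<in> {0..1} \<Longrightarrow> 0 < d t \<and> (\<forall>s\<in>{0..1}. dist s t < d t \<longrightarrow> norm (h s) \<le> B t)"
    by metis
  have "{0..1::real} \<subseteq> (\<Union>t\<in>{0..1}. ball t (d t))"
  proof
    fix t :: real assume "t \<in> {0..1}"
    then show "t \<in> (\<Union>t\<in>{0..1}. ball t (d t))" using dB[of t] by (intro UN_I[of t]) auto
  qed
  then obtain C where C: "C \<subseteq> {0..1}" "finite C" "{0..1::real} \<subseteq> (\<Union>t\<in>C. ball t (d t))"
    using compactE_image[where S = "{0..1::real}" and C = "{0..1}" and f = "\<lambda>t. ball t (d t)"] by auto
  have "norm (h s) \<le> Max (B ` C)" if s: "s \<in> {0..1}" for s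
  proof -
    obtain t where "t \<in> C" "s \<in> ball t (d t)" using C s by blast
    then have "dist s t < d t" by (simp add: dist_commute)
    then have "norm (h s) \<le> B t" using dB[of t] \<open>t \<in> C\<close> C(1) s by blast
    also have "B t \<le> Max (B ` C)" using \<open>t \<in> C\<close> C by simp
    finally show ?thesis .
  qed
  then show ?thesis unfolding bounded_iff by blast
qed

lemma cadlag_Lim_at_left_mem:
  fixes h :: "real \<Rightarrow> real^'d"
  assumes "cadlag h" "t \<in> {0<..1}" "closed S" "eventually (\<lambda>s. h s \<in> S) (at_left t)"
  shows "Lim (at_left t) h \<in> S"
proof -
  obtain l where l: "(h \<longlongrightarrow> l) (at_left t)" using assms(1,2) unfolding cadlag_def by blast
  then have "l \<in> S" using assms(3,4) by (intro Lim_in_closed_set) auto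
  then show ?thesis using tendsto_Lim[OF _ l] by simp
qed

section \<open>Uniform partitions into cells\<close>

definition cell :: "nat \<Rightarrow> nat \<Rightarrow> real set" where
  "cell N l = {real l / real N .. real (Suc l) / real N}"

lemma mem_cell_iff:
  assumes "0 < N"
  shows "s \<in> cell N l \<longleftrightarrow> real l \<le> s * real N \<and> s * real N \<le> real l + 1"
  using assms by (simp add: cell_def field_simps)

lemma cell_subset: "l < N \<Longrightarrow> cell N l \<subseteq> {0..1}"
  by (auto simp: cell_def divide_simps)

lemma ex_cell:
  assumes N: "0 < N" and s: "s \<in> {0..1}"
  shows "\<exists>l<N. s \<in> cell N l"
proof (cases "s * real N < real N")
  case True
  define l where "l = nat \<lfloor>s * real N\<rfloor>"
  have "real l = of_int \<lfloor>s * real N\<rfloor>" using s unfolding l_def by simp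
  then have "real l \<le> s * real N" "s * real N \<le> real l + 1" "l < N"
    using True floor_le_iff[of "s * real N"] by linarith+
  then show ?thesis using N by (auto simp: mem_cell_iff)
next
  case False
  then have "real (N - 1) \<le> s * real N" "s * real N \<le> real (N - 1) + 1"
    using s N by (auto simp: of_nat_diff mult_le_cancel_right1)
  then show ?thesis using N by (intro exI[of _ "N - 1"]) (auto simp: mem_cell_iff)
qed

lemma bounded_image_cell:
  "bounded (f ` {0..1}) \<Longrightarrow> l < N \<Longrightarrow> bounded (f ` cell N l)"
  by (meson bounded_subset cell_subset image_mono)

lemma dist_le_sum_diameter_cells:
  assumes bdd: "bounded (f ` {0..1})"
  shows "i \<le> j \<Longrightarrow> j < N \<Longrightarrow> a \<in> cell N i \<Longrightarrow> b \<in> cell N j \<Longrightarrow>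
     dist (f a) (f b) \<le> (\<Sum>l=i..j. diameter (f ` cell N l))"
proof (induction j arbitrary: b)
  case 0
  then show ?case using diameter_bounded_bound[OF bounded_image_cell[OF bdd]] by simp
next
  case (Suc j)
  show ?case
  proof (cases "i = Suc j")
    case True
    then show ?thesis using Suc.prems diameter_bounded_bound[OF bounded_image_cell[OF bdd]] by simp
  next
    case False
    let ?c = "real (Suc j) / real N"
    have c: "?c \<in> cell N j" "?c \<in> cell N (Suc j)" using Suc.prems by (auto simp: cell_def divide_right_mono)
    have "dist (f a) (f b) \<le> dist (f a) (f ?c) + dist (f ?c) (f b)" by (rule dist_triangle)
    also have "dist (f a) (f ?c) \<le> (\<Sum>l=i..j. diameter (f ` cell N l))"
      using Suc.IH[OF _ _ _ c(1)] Suc.prems False by simp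
    also have "dist (f ?c) (f b) \<le> diameter (f ` cell N (Suc j))"
      using Suc.prems c by (intro diameter_bounded_bound bounded_image_cell[OF bdd]) auto
    finally show ?thesis using Suc.prems False by (simp add: sum.cl_ivl_Suc)
  qed
qed

definition cell_window_diam :: "(real \<Rightarrow> 'a::metric_space) \<Rightarrow> nat \<Rightarrow> nat \<Rightarrow> nat \<Rightarrow> real" where
  "cell_window_diam f N M k = (\<Sum>l\<in>{k - M..k + M} \<inter> {..<N}. diameter (f ` cell N l))"

lemma dist_le_cell_window_diam:
  assumes bdd: "bounded (f ` {0..1})" and N: "0 < N" and M: "r * real N + 2 \<le> real M"
    and k: "k < N" "t \<in> cell N k" and s: "s \<in> {0..1}" "\<bar>s - t\<bar> < r + 1 / real N"
  shows "dist (f s) (f t) \<le> cell_window_diam f N M k"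
proof -
  obtain c where c: "c < N" "s \<in> cell N c" using ex_cell[OF N s(1)] by blast
  have "\<bar>s * real N - t * real N\<bar> = \<bar>s - t\<bar> * real N"
    by (metis abs_mult abs_of_nat left_diff_distrib)
  also have "\<dots> < (r + 1 / real N) * real N" using s(2) N by (intro mult_strict_right_mono) auto
  also have "\<dots> = r * real N + 1" using N by (simp add: field_simps)
  finally have "\<bar>s * real N - t * real N\<bar> < r * real N + 1" .
  then have close: "c \<le> k + M" "k \<le> c + M"
    using c(2) k(2) M N unfolding mem_cell_iff[OF N] by linarith+
  have diam_nonneg: "0 \<le> diameter (f ` cell N l)" if "l < N" for l
    using diameter_ge_0[OF bounded_image_cell[OF bdd that]] .
  have "dist (f s) (f t) \<le> (\<Sum>l=min c k..max c k. diameter (f ` cell N l))"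
    using dist_le_sum_diameter_cells[OF bdd, of c k N s t] dist_le_sum_diameter_cells[OF bdd, of k c N t s]
      c k by (cases "c \<le> k") (auto simp: min_def max_def dist_commute)
  also have "\<dots> \<le> cell_window_diam f N M k"
    unfolding cell_window_diam_def
    using close c(1) k(1) diam_nonneg by (intro sum_mono2) auto
  finally show ?thesis .
qed

lemma sum_windows_le:
  fixes e :: "nat \<Rightarrow> real"
  assumes e: "\<And>l. l < N \<Longrightarrow> 0 \<le> e l"
  shows "(\<Sum>k<N. \<Sum>l\<in>{k - M..k + M} \<inter> {..<N}. e l) \<le> real (2 * M + 1) * (\<Sum>l<N. e l)"
proof -
  have window: "(\<Sum>l\<in>{k - M..k + M} \<inter> {..<N}. e l) = (\<Sum>l<N. if k \<in> {l - M..l + M} then e l else 0)"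
    for k
  proof -
    have "(\<Sum>l\<in>{k - M..k + M} \<inter> {..<N}. e l) = (\<Sum>l<N. if l \<in> {k - M..k + M} then e l else 0)"
      by (simp add: Int_commute sum.inter_restrict)
    also have "\<dots> = (\<Sum>l<N. if k \<in> {l - M..l + M} then e l else 0)"
      by (intro sum.cong refl) auto
    finally show ?thesis .
  qed
  have "(\<Sum>k<N. \<Sum>l\<in>{k - M..k + M} \<inter> {..<N}. e l) = (\<Sum>l<N. \<Sum>k<N. if k \<in> {l - M..l + M} then e l else 0)"
    unfolding window by (rule sum.swap)
  also have "\<dots> = (\<Sum>l<N. real (card ({..<N} \<inter> {l - M..l + M})) * e l)"
  proof (rule sum.cong[OF refl])
    fix l
    have "(\<Sum>k<N. if k \<in> {l - M..l + M} then e l else 0) = (\<Sum>k\<in>{..<N} \<inter> {l - M..l + M}. e l)"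
      by (rule sum.inter_restrict[symmetric]) simp
    then show "(\<Sum>k<N. if k \<in> {l - M..l + M} then e l else 0) = real (card ({..<N} \<inter> {l - M..l + M})) * e l"
      by simp
  qed
  also have "\<dots> \<le> (\<Sum>l<N. real (2 * M + 1) * e l)"
  proof (intro sum_mono mult_right_mono)
    fix l
    have "card ({..<N} \<inter> {l - M..l + M}) \<le> card {l - M..l + M}" by (intro card_mono) auto
    then show "real (card ({..<N} \<inter> {l - M..l + M})) \<le> real (2 * M + 1)" by simp
  qed (use e in auto)
  finally show ?thesis by (simp add: sum_distrib_left)
qed

lemma integral_le_sum_cells:
  fixes f :: "real \<Rightarrow> real"
  assumes f: "f integrable_on {0..1}" and N: "0 < N"
    and B: "\<And>k t. k < N \<Longrightarrow> t \<in> cell N k \<Longrightarrow> f t \<le> B k"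
  shows "integral {0..1} f \<le> (\<Sum>k<N. B k) / real N"
proof -
  have "integral {0..real n / real N} f \<le> (\<Sum>k<n. B k) / real N" if "n \<le> N" for n
    using that
  proof (induction n)
    case (Suc n)
    let ?a = "real n / real N" and ?b = "real (Suc n) / real N"
    have ab: "0 \<le> ?a" "?a \<le> ?b" "?b \<le> 1" using Suc.prems N by (auto simp: divide_simps)
    have "integral {0..?b} f = integral {0..?a} f + integral {?a..?b} f"
      using ab by (intro Henstock_Kurzweil_Integration.integral_combine[symmetric]
          integrable_subinterval_real[OF f]) auto
    also have "integral {?a..?b} f \<le> integral {?a..?b} (\<lambda>_. B n)"
      using B[of n] Suc.prems ab unfolding cell_def
      by (intro integral_le integrable_subinterval_real[OF f]) auto
    also have "\<dots> = B n / real N" using ab N by (simp add: divide_simps algebra_simps)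
    finally show ?case using Suc by (simp add: add_divide_distrib)
  qed simp
  from this[of N] show ?thesis using N by simp
qed

section \<open>Diameters on cells and the variation\<close>

lemma diameter_image_Icc_le_Ioc:
  fixes f :: "real \<Rightarrow> 'a::metric_space"
  assumes f: "(f \<longlongrightarrow> f a) (at_right a)" and ab: "a < b" and bdd: "bounded (f ` {a..b})"
  shows "diameter (f ` {a..b}) \<le> diameter (f ` {a<..b})"
proof -
  have inner: "f x \<in> closure (f ` {a<..b})" if "x \<in> {a<..b}" for x
    using that by (intro closure_subset[THEN subsetD] imageI)
  have "eventually (\<lambda>x. x \<in> {a<..b}) (at_right a)"
    unfolding eventually_at_right_field using ab by (intro exI[of _ b]) auto
  then have "eventually (\<lambda>x. f x \<in> closure (f ` {a<..b})) (at_right a)"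
    by (rule eventually_mono) (rule inner)
  then have fa: "f a \<in> closure (f ` {a<..b})"
    using Lim_in_closed_set[OF closed_closure _ _ f] by simp
  have sub: "f ` {a..b} \<subseteq> closure (f ` {a<..b})"
  proof (rule image_subsetI)
    fix x assume x: "x \<in> {a..b}"
    show "f x \<in> closure (f ` {a<..b})"
    proof (cases "x = a")
      case False
      then show ?thesis using x by (intro inner) auto
    qed (use fa in simp)
  qed
  have bdd': "bounded (f ` {a<..b})" using bdd by (rule bounded_subset) auto
  show ?thesis
    using diameter_subset[OF sub bounded_closure[OF bdd']] diameter_closure[OF bdd'] by simp
qed

lemma diameter_le_dist_add:
  fixes S :: "'a::metric_space set"
  assumes "bounded S" "S \<noteq> {}" "0 < \<delta>"
  shows "\<exists>x\<in>S. \<exists>y\<in>S. diameter S \<le> dist x y + \<delta>"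
proof (cases "\<delta> < diameter S")
  case True
  then obtain x y where "x \<in> S" "y \<in> S" "diameter S - \<delta> < dist x y"
    using diameter_lower_bounded[OF assms(1), of "diameter S - \<delta>"] assms(3) by auto
  then show ?thesis by (intro bexI[of _ x] bexI[of _ y]) auto
next
  case False
  obtain x where "x \<in> S" using assms(2) by blast
  then show ?thesis using False by (intro bexI[of _ x] bexI[of _ x]) auto
qed

lemma sorted_concat_cell_pairs:
  assumes "\<forall>l<n. a l \<le> c l \<and> real l / real N \<le> a l \<and> c l \<le> real (Suc l) / real N"
  shows "sorted (concat (map (\<lambda>l. [a l, c l]) [0..<n]))"
proof -
  have "sorted (concat (map (\<lambda>l. [a l, c l]) [0..<n]))
        \<and> (\<forall>x\<in>set (concat (map (\<lambda>l. [a l, c l]) [0..<n])). x \<le> real n / real N)"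
    using assms
  proof (induction n)
    case (Suc n)
    have "real n / real N \<le> real (Suc n) / real N" by (simp add: divide_right_mono)
    with Suc show ?case by (fastforce simp: sorted_append)
  qed simp
  then show ?thesis ..
qed

lemma Var_ge_sum_cell_increments:
  fixes h :: "real \<Rightarrow> real^'d"
  assumes BV: "BV h" and N: "0 < N"
    and ac: "\<forall>l<N. a l \<le> c l \<and> a l \<in> cell N l \<and> c l \<in> cell N l"
    and t: "0 < t" "\<forall>l<N. t \<le> a l"
  shows "norm (h t) + (\<Sum>l<N. dist (h (a l)) (h (c l))) \<le> Var h"
proof -
  define ys where "ys = concat (map (\<lambda>l. [a l, c l]) [0..<N])"
  have cell_point: "\<exists>l<N. y \<in> cell N l \<and> t \<le> y" if "y \<in> set ys" for y
  proof -
    obtain l where l: "l < N" "y = a l \<or> y = c l" using \<open>y \<in> set ys\<close> unfolding ys_def by auto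
    have "a l \<le> c l" "a l \<in> cell N l" "c l \<in> cell N l" "t \<le> a l" using ac t(2) l(1) by auto
    then show ?thesis using l by auto
  qed
  have ys_bounds: "0 < y \<and> y \<le> 1" if y: "y \<in> set ys" for y
  proof -
    obtain l where "l < N" "y \<in> cell N l" "t \<le> y" using cell_point[OF y] by blast
    then show ?thesis using cell_subset[of l N] t(1) by auto
  qed
  have "a 0 \<in> set ys" using N unfolding ys_def by auto
  then have t1: "t \<le> 1" using t(2) N ys_bounds by force
  have "sorted ys"
    unfolding ys_def using ac by (intro sorted_concat_cell_pairs[where N = N]) (simp add: cell_def)
  moreover have "\<forall>y\<in>set ys. t \<le> y" using cell_point by blast
  ultimately have "sorted (t # ys)" by simp
  moreover have "set (t # ys) \<subseteq> {0<..1}"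
  proof
    fix y assume "y \<in> set (t # ys)"
    then show "y \<in> {0<..1}" using t(1) t1 ys_bounds[of y] by auto
  qed
  ultimately have "norm (h t) + chain_length h (t # ys) \<le> Var h"
    using Var_ge_chain_length[OF BV, of "t # ys"] by simp
  moreover have "(\<Sum>l<N. dist (h (a l)) (h (c l))) \<le> chain_length h ys"
    using chain_length_concat_ge[of h "map (\<lambda>l. [a l, c l]) [0..<N]"]
    by (simp add: ys_def sum_set_upt_conv_sum_list_nat[symmetric] atLeast0LessThan comp_def)
  ultimately show ?thesis using chain_length_le_Cons[of h ys t] by linarith
qed

lemma ex_near_diameter_points_in_cells:
  fixes h :: "real \<Rightarrow> real^'d"
  assumes cad: "cadlag h" and N: "0 < N" and \<delta>: "0 < \<delta>"
  shows "\<exists>p q. \<forall>l<N. p l \<in> cell N l \<and> q l \<in> cell N l \<and> 0 < p l \<and> 0 < q l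
                 \<and> diameter (h ` cell N l) \<le> dist (h (p l)) (h (q l)) + \<delta>"
proof -
  have bdd: "bounded (h ` {0..1})" by (rule cadlag_bounded[OF cad])
  have "\<exists>x y. x \<in> cell N l \<and> y \<in> cell N l \<and> 0 < x \<and> 0 < y
              \<and> diameter (h ` cell N l) \<le> dist (h x) (h y) + \<delta>" if l: "l < N" for l
  proof -
    txt \<open>\<open>Var\<close> only sees partitions of \<open>(0,1]\<close>; by right continuity at 0 the first cell
      may lose its left endpoint without changing the diameter.\<close>
    define S where "S = cell N l \<inter> {0<..}"
    have "bounded (h ` S)"
      using bounded_image_cell[OF bdd l] unfolding S_def by (rule bounded_subset) auto
    moreover have "real (Suc l) / real N \<in> S" using N unfolding S_def cell_def by (auto simp: divide_right_mono)
    ultimately obtain x y where xy: "x \<in> S" "y \<in> S" "diameter (h ` S) \<le> dist (h x) (h y) + \<delta>"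
      using diameter_le_dist_add[OF _ _ \<delta>, of "h ` S"] by blast
    have "diameter (h ` cell N l) \<le> diameter (h ` S)"
    proof (cases "l = 0")
      case True
      have "(h \<longlongrightarrow> h 0) (at_right 0)" using cad unfolding cadlag_def by simp
      moreover have "cell N l = {0..1 / real N}" "S = {0<..1 / real N}"
        using True unfolding S_def cell_def by auto
      ultimately show ?thesis
        using diameter_image_Icc_le_Ioc[of h 0 "1 / real N"] bounded_image_cell[OF bdd l] N by simp
    next
      case False
      then have "0 < real l / real N" using N by simp
      then have "S = cell N l" unfolding S_def cell_def by (auto intro: less_le_trans)
      then show ?thesis by simp
    qed
    then show ?thesis using xy unfolding S_def by (intro exI[of _ x] exI[of _ y]) auto
  qed
  then show ?thesis by metis
qed

lemma sum_diameter_cells_le_Var: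
  fixes h :: "real \<Rightarrow> real^'d"
  assumes BV: "BV h" and N: "0 < N"
  shows "(\<Sum>l<N. diameter (h ` cell N l)) \<le> Var h - norm (h 0)"
proof (rule field_le_epsilon)
  fix \<epsilon> :: real assume "0 < \<epsilon>"
  define \<delta> where "\<delta> = \<epsilon> / (real N + 1)"
  have \<delta>: "0 < \<delta>" using \<open>0 < \<epsilon>\<close> unfolding \<delta>_def by simp
  have cad: "cadlag h" using BV unfolding BV_def by simp
  obtain p q where pq: "\<forall>l<N. p l \<in> cell N l \<and> q l \<in> cell N l \<and> 0 < p l \<and> 0 < q l
      \<and> diameter (h ` cell N l) \<le> dist (h (p l)) (h (q l)) + \<delta>"
    using ex_near_diameter_points_in_cells[OF cad N \<delta>] by blast
  have "(h \<longlongrightarrow> h 0) (at_right 0)" using cad unfolding cadlag_def by simp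
  from tendstoD[OF this \<delta>] obtain b where b: "0 < b" "\<forall>y>0. y < b \<longrightarrow> dist (h y) (h 0) < \<delta>"
    unfolding eventually_at_right_field by auto
  txt \<open>The interpolants defining \<open>Var\<close> start at 0, so \<open>Var\<close> pays \<open>|h t|\<close> for the first
    partition point \<open>t\<close>; choosing \<open>t\<close> close to 0 makes this at least \<open>|h 0| - \<delta>\<close>.\<close>
  define P where "P = insert b (p ` {..<N} \<union> q ` {..<N})"
  have P: "finite P" "P \<noteq> {}" unfolding P_def by auto
  define t where "t = Min P / 2"
  have "0 < Min P" using b pq P unfolding P_def by (subst Min_gr_iff) auto
  moreover have "Min P \<le> b" "\<forall>l<N. Min P \<le> p l \<and> Min P \<le> q l" using P unfolding P_def by auto
  ultimately have t: "0 < t" "t < b" "\<forall>l<N. t \<le> min (p l) (q l)" unfolding t_def by auto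
  have "norm (h t) + (\<Sum>l<N. dist (h (min (p l) (q l))) (h (max (p l) (q l)))) \<le> Var h"
    using pq t by (intro Var_ge_sum_cell_increments[OF BV N]) (auto simp: min_def max_def)
  moreover have "dist (h (min (p l) (q l))) (h (max (p l) (q l))) = dist (h (p l)) (h (q l))" for l
    by (cases "p l \<le> q l") (auto simp: dist_commute)
  moreover have "(\<Sum>l<N. diameter (h ` cell N l)) \<le> (\<Sum>l<N. dist (h (p l)) (h (q l)) + \<delta>)"
    using pq by (intro sum_mono) auto
  moreover have "norm (h 0) \<le> norm (h t) + \<delta>"
    using b(2) t(1,2) norm_triangle_sub[of "h 0" "h t"] by (auto simp: dist_norm norm_minus_commute)
  moreover have "real N * \<delta> + \<delta> = (real N + 1) * \<delta>" by (simp add: algebra_simps)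
  moreover have "(real N + 1) * \<delta> = \<epsilon>" unfolding \<delta>_def by simp
  ultimately show "(\<Sum>l<N. diameter (h ` cell N l)) \<le> Var h - norm (h 0) + \<epsilon>"
    by (simp add: sum.distrib)
qed

lemma norm_le_Var:
  fixes h :: "real \<Rightarrow> real^'d"
  assumes "BV h"
  shows "norm (h 0) \<le> Var h"
proof -
  have "bounded (h ` cell 1 0)"
    using assms cadlag_bounded bounded_image_cell unfolding BV_def by blast
  then show ?thesis using sum_diameter_cells_le_Var[OF assms, of 1] diameter_ge_0 by fastforce
qed

section \<open>Completed graphs\<close>

definition cgraph_from :: "'a::real_normed_vector \<Rightarrow> (real \<Rightarrow> 'a) \<Rightarrow> (real \<times> 'a) set" where
  "cgraph_from v h =
     {(t, x). t \<in> {0..1} \<and> x \<in> closed_segment (if t = 0 then v else Lim (at_left t) h) (h t)}"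

lemma cgraph_eq_cgraph_from: "cgraph h = cgraph_from (h 0) h" "cgraph' h = cgraph_from 0 h"
  by (auto simp: cgraph_def cgraph'_def cgraph_from_def lefts_def lefts'_def)

lemma graph_mem_cgraph_from: "t \<in> {0..1} \<Longrightarrow> (t, h t) \<in> cgraph_from v h"
  by (simp add: cgraph_from_def)

lemma bounded_cgraph_from:
  fixes g :: "real \<Rightarrow> real^'d" and v :: "real^'d"
  assumes cad: "cadlag g"
  shows "bounded (cgraph_from v g)"
proof -
  obtain B where B: "\<forall>t\<in>{0..1}. norm (g t) \<le> B"
    using cadlag_bounded[OF cad] unfolding bounded_iff by auto
  define K where "K = cball (0::real^'d) (max B (norm v))"
  have gK: "g t \<in> K" if "t \<in> {0..1}" for t
    using B that unfolding K_def by (simp add: le_max_iff_disj)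
  have left: "(if t = 0 then v else Lim (at_left t) g) \<in> K" if t: "t \<in> {0..1}" for t
  proof (cases "t = 0")
    case False
    have "eventually (\<lambda>s. g s \<in> K) (at_left t)"
      unfolding eventually_at_left_field using t False gK by (intro exI[of _ 0]) auto
    then have "Lim (at_left t) g \<in> K"
      using False t by (intro cadlag_Lim_at_left_mem[OF cad]) (auto simp: K_def)
    then show ?thesis using False by simp
  qed (simp add: K_def)
  have "cgraph_from v g \<subseteq> {0..1} \<times> K"
  proof safe
    fix t x assume "(t, x) \<in> cgraph_from v g"
    then have t: "t \<in> {0..1}" and x: "x \<in> closed_segment (if t = 0 then v else Lim (at_left t) g) (g t)"
      unfolding cgraph_from_def by auto
    have "closed_segment (if t = 0 then v else Lim (at_left t) g) (g t) \<subseteq> K"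
      using left[OF t] gK[OF t] unfolding K_def by (intro closed_segment_subset) auto
    then show "x \<in> K" using x by blast
  qed (auto simp: cgraph_from_def)
  then show ?thesis unfolding K_def by (rule bounded_subset[rotated]) (simp add: bounded_Times)
qed

lemma cgraph_from_point_dist_le:
  fixes h :: "real \<Rightarrow> real^'d"
  assumes cad: "cadlag h" and N: "0 < N" and M: "r * real N + 2 \<le> real M"
    and k: "k < N" "t \<in> cell N k" and p: "(t', x) \<in> cgraph_from v h" "\<bar>t' - t\<bar> < r"
  shows "dist x (h t) \<le> cell_window_diam h N M k + (if k \<le> M then norm (v - h 0) else 0)"
proof -
  define W where "W = cell_window_diam h N M k"
  define R where "R = W + (if k \<le> M then norm (v - h 0) else 0)"
  have bdd: "bounded (h ` {0..1})" by (rule cadlag_bounded[OF cad])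
  have near: "dist (h s) (h t) \<le> W" if "s \<in> {0..1}" "\<bar>s - t\<bar> < r + 1 / real N" for s
    unfolding W_def using dist_le_cell_window_diam[OF bdd N M k] that by blast
  have t': "t' \<in> {0..1}" and x: "x \<in> closed_segment (if t' = 0 then v else Lim (at_left t') h) (h t')"
    using p(1) unfolding cgraph_from_def by auto
  have "W \<le> R" unfolding R_def by simp
  have "0 < 1 / real N" using N by simp
  then have "dist (h t') (h t) \<le> W" using p(2) by (intro near[OF t']) linarith
  then have right: "h t' \<in> cball (h t) R" using \<open>W \<le> R\<close> by (simp add: dist_commute)
  have left: "(if t' = 0 then v else Lim (at_left t') h) \<in> cball (h t) R"
  proof (cases "t' = 0")
    case True
    have t01: "t \<in> {0..1}" using k cell_subset by blast
    then have "real k \<le> t * real N" "t < r" using k(2) p(2) True N by (auto simp: mem_cell_iff)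
    moreover have "t * real N < r * real N" using \<open>t < r\<close> N by simp
    ultimately have "real k \<le> real M" using M by linarith
    then have "k \<le> M" by simp
    moreover have "\<bar>0 - t\<bar> < r + 1 / real N"
      using p(2) \<open>0 < 1 / real N\<close> unfolding True abs_less_iff by linarith
    then have "dist (h 0) (h t) \<le> W" by (intro near) auto
    ultimately show ?thesis
      using True dist_triangle[of v "h t" "h 0"] unfolding R_def
      by (simp add: dist_commute dist_norm)
  next
    case False
    have "eventually (\<lambda>s. h s \<in> cball (h t) W) (at_left t')"
      unfolding eventually_at_left_field
    proof (intro exI[of _ "max 0 (t' - 1 / real N)"] conjI allI impI)
      show "max 0 (t' - 1 / real N) < t'" using False t' N by auto
      fix s assume "max 0 (t' - 1 / real N) < s" "s < t'"
      then show "h s \<in> cball (h t) W"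
        using near[of s] t' p(2) by (auto simp: dist_commute)
    qed
    then have "Lim (at_left t') h \<in> cball (h t) W"
      using False t' by (intro cadlag_Lim_at_left_mem[OF cad]) auto
    then show ?thesis using False \<open>W \<le> R\<close> by auto
  qed
  have "x \<in> cball (h t) R"
    using x closed_segment_subset[OF left right] by blast
  then show ?thesis unfolding R_def W_def by (simp add: dist_commute)
qed

lemma integral_le_cell_window_estimate:
  fixes g h :: "real \<Rightarrow> real^'d"
  assumes cad: "cadlag h" and f: "(\<lambda>s. norm (g s - h s)) integrable_on {0..1}"
    and N: "0 < N" and M: "r * real N + 2 \<le> real M"
    and close: "\<forall>t\<in>{0..1}. \<exists>(t', x)\<in>cgraph_from v h. \<bar>t' - t\<bar> < r \<and> dist (g t) x < r"
  shows "integral {0..1} (\<lambda>s. norm (g s - h s))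
           \<le> r + (real (2 * M + 1) * (\<Sum>l<N. diameter (h ` cell N l)) + real (M + 1) * norm (v - h 0))
                 / real N"
proof -
  define z where "z = norm (v - h 0)"
  have bdd: "bounded (h ` {0..1})" by (rule cadlag_bounded[OF cad])
  define B where "B k = r + cell_window_diam h N M k + (if k \<le> M then z else 0)" for k
  have "norm (g t - h t) \<le> B k" if k: "k < N" "t \<in> cell N k" for k t
  proof -
    have "t \<in> {0..1}" using k cell_subset by blast
    then obtain t' x where tx: "(t', x) \<in> cgraph_from v h" "\<bar>t' - t\<bar> < r" "dist (g t) x < r"
      using close by blast
    have "norm (g t - h t) \<le> dist (g t) x + dist x (h t)" by (metis dist_norm dist_triangle)
    then show ?thesis
      using tx cgraph_from_point_dist_le[OF cad N M k tx(1,2)] unfolding B_def z_def by linarith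
  qed
  then have "integral {0..1} (\<lambda>s. norm (g s - h s)) \<le> (\<Sum>k<N. B k) / real N"
    by (rule integral_le_sum_cells[OF f N])
  also have "(\<Sum>k<N. B k) \<le> real N * r + real (2 * M + 1) * (\<Sum>l<N. diameter (h ` cell N l))
                                + real (M + 1) * z"
  proof -
    have "(\<Sum>k<N. cell_window_diam h N M k) \<le> real (2 * M + 1) * (\<Sum>l<N. diameter (h ` cell N l))"
      unfolding cell_window_diam_def
      using diameter_ge_0[OF bounded_image_cell[OF bdd]] by (intro sum_windows_le) auto
    moreover have "(\<Sum>k<N. if k \<le> M then z else 0) = real (card ({..<N} \<inter> {..M})) * z"
      by (simp add: sum.If_cases atMost_def)
    moreover have "real (card ({..<N} \<inter> {..M})) * z \<le> real (M + 1) * z"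
      using card_mono[of "{..M}" "{..<N} \<inter> {..M}"] by (intro mult_right_mono) (auto simp: z_def)
    ultimately show ?thesis unfolding B_def by (simp add: sum.distrib)
  qed
  finally show ?thesis using N unfolding z_def by (simp add: divide_simps) (simp add: algebra_simps)
qed

lemma integral_le_of_cgraph_from_proximity:
  fixes g h :: "real \<Rightarrow> real^'d"
  assumes BV: "BV h" and r: "0 < r"
    and close: "\<forall>t\<in>{0..1}. \<exists>(t', x)\<in>cgraph_from v h. \<bar>t' - t\<bar> < r \<and> dist (g t) x < r"
  shows "integral {0..1} (\<lambda>s. norm (g s - h s)) \<le> 2 * (Var h - norm (h 0) + norm (v - h 0) + 1) * r"
proof (cases "(\<lambda>s. norm (g s - h s)) integrable_on {0..1}")
  case False
  then show ?thesis using norm_le_Var[OF BV] r by (simp add: not_integrable_integral)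
next
  case True
  have cad: "cadlag h" using BV unfolding BV_def by simp
  define V where "V = Var h - norm (h 0)"
  define z where "z = norm (v - h 0)"
  have V: "0 \<le> V" using norm_le_Var[OF BV] unfolding V_def by simp
  have z: "0 \<le> z" unfolding z_def by simp
  txt \<open>\<open>N\<close> is chosen so that the boundary terms \<open>(7 V + 4 z) / N\<close> of the estimate are at most \<open>r\<close>.\<close>
  define N where "N = nat \<lceil>(7 * V + 4 * z) / r\<rceil> + 1"
  define M where "M = nat \<lceil>r * real N\<rceil> + 2"
  have N: "0 < N" unfolding N_def by simp
  have "(7 * V + 4 * z) / r \<le> real N" unfolding N_def by linarith
  then have NV: "7 * V + 4 * z \<le> r * real N" using r by (simp add: divide_simps mult.commute)
  have "0 \<le> r * real N" using r by simp
  then have M: "r * real N + 2 \<le> real M" "real M \<le> r * real N + 3" unfolding M_def by linarith+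
  define E where "E = (\<Sum>l<N. diameter (h ` cell N l))"
  have E: "0 \<le> E" "E \<le> V"
    unfolding E_def V_def using sum_diameter_cells_le_Var[OF BV N]
      diameter_ge_0[OF bounded_image_cell[OF cadlag_bounded[OF cad]]] by (auto intro: sum_nonneg)
  have "real (2 * M + 1) * E + real (M + 1) * z \<le> (2 * (r * real N) + 7) * V + (r * real N + 4) * z"
    using M E V z r by (intro add_mono mult_mono) auto
  also have "\<dots> = real N * ((2 * V + z) * r) + (7 * V + 4 * z)" by (simp add: algebra_simps)
  also have "\<dots> \<le> real N * ((2 * V + z + 1) * r)" using NV by (simp add: algebra_simps)
  finally have "(real (2 * M + 1) * E + real (M + 1) * z) / real N \<le> (2 * V + z + 1) * r"
    using N by (simp add: divide_simps mult.commute)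
  moreover have "0 \<le> z * r" using z r by simp
  ultimately show ?thesis
    using integral_le_cell_window_estimate[OF cad True N M(1) close] unfolding E_def V_def z_def
    by (simp add: algebra_simps)
qed

section \<open>Hausdorff distance\<close>

lemma bdd_above_infdist_image:
  fixes S :: "'a::metric_space set"
  assumes "bounded S"
  shows "bdd_above ((\<lambda>x. infdist x T) ` S)"
proof -
  obtain a e where ae: "\<forall>x\<in>S. dist a x \<le> e" using assms unfolding bounded_def by blast
  have "infdist x T \<le> infdist a T + e" if "x \<in> S" for x
  proof -
    have "dist x a \<le> e" using ae that by (metis dist_commute)
    then show ?thesis using infdist_triangle[of x T a] by linarith
  qed
  then show ?thesis by (rule bdd_aboveI2)
qed

lemma infdist_le_hausdist:
  assumes "bounded S" "x \<in> S"
  shows "infdist x T \<le> hausdist S T"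
  unfolding hausdist_def
  using cSUP_upper[OF assms(2) bdd_above_infdist_image[OF assms(1), of T]] by (simp add: le_max_iff_disj)

lemma ex_dist_less_of_infdist_less:
  assumes "T \<noteq> {}" "infdist x T < r"
  shows "\<exists>y\<in>T. dist x y < r"
  using assms by (simp add: infdist_notempty cINF_less_iff)

lemma hausdist_nonneg:
  assumes "bounded S" "x \<in> S"
  shows "0 \<le> hausdist S T"
  using infdist_nonneg infdist_le_hausdist[OF assms] order_trans by blast

lemma integral_le_hausdist:
  fixes g h :: "real \<Rightarrow> real^'d" and v :: "real^'d"
  assumes BV: "BV h" and G: "bounded G" "\<forall>t\<in>{0..1}. (t, g t) \<in> G"
  defines "\<rho> \<equiv> hausdist G (cgraph_from v h)"
  shows "integral {0..1} (\<lambda>s. norm (g s - h s)) \<le> 2 * (Var h - norm (h 0) + norm (v - h 0) + 1) * \<rho>"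
proof -
  define c where "c = 2 * (Var h - norm (h 0) + norm (v - h 0) + 1)"
  have c: "0 < c"
    using norm_le_Var[OF BV] norm_ge_zero[of "v - h 0"] unfolding c_def by (intro mult_pos_pos; linarith)
  have near: "infdist (t, g t) (cgraph_from v h) \<le> \<rho>" if "t \<in> {0..1}" for t
    unfolding \<rho>_def using G that by (intro infdist_le_hausdist) auto
  have ne: "cgraph_from v h \<noteq> {}" using graph_mem_cgraph_from[of 0] by auto
  have "0 \<le> \<rho>" unfolding \<rho>_def using G by (intro hausdist_nonneg[of G "(0, g 0)"]) auto
  have "integral {0..1} (\<lambda>s. norm (g s - h s)) / c \<le> \<rho>"
  proof (rule dense_ge)
    fix r assume r: "\<rho> < r"
    have "0 < r" using \<open>0 \<le> \<rho>\<close> r by linarith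
    moreover have "\<forall>t\<in>{0..1}. \<exists>(t', x)\<in>cgraph_from v h. \<bar>t' - t\<bar> < r \<and> dist (g t) x < r"
    proof
      fix t :: real assume "t \<in> {0..1}"
      then have "infdist (t, g t) (cgraph_from v h) < r" using near r by fastforce
      then obtain q where q: "q \<in> cgraph_from v h" "dist (t, g t) q < r"
        using ex_dist_less_of_infdist_less[OF ne] by blast
      then have "\<bar>fst q - t\<bar> < r" "dist (g t) (snd q) < r"
        using dist_fst_le[of "(t, g t)" q] dist_snd_le[of "(t, g t)" q] by (auto simp: dist_real_def)
      then show "\<exists>(t', x)\<in>cgraph_from v h. \<bar>t' - t\<bar> < r \<and> dist (g t) x < r"
        using q(1) by (intro bexI[of _ q]) auto
    qed
    ultimately have "integral {0..1} (\<lambda>s. norm (g s - h s)) \<le> c * r"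
      unfolding c_def by (intro integral_le_of_cgraph_from_proximity[OF BV]) auto
    then show "integral {0..1} (\<lambda>s. norm (g s - h s)) / c \<le> r" using c by (simp add: divide_simps mult.commute)
  qed
  then show ?thesis using c unfolding c_def by (simp add: divide_simps mult.commute)
qed

lemma integral_le_hausdist_cgraph_from:
  fixes g h :: "real \<Rightarrow> real^'d" and v w :: "real^'d"
  assumes "BV h" "cadlag g"
  shows "integral {0..1} (\<lambda>s. norm (g s - h s))
           \<le> 2 * (Var h - norm (h 0) + norm (v - h 0) + 1) * hausdist (cgraph_from w g) (cgraph_from v h)"
  by (rule integral_le_hausdist[OF assms(1) bounded_cgraph_from[OF assms(2)]])
    (simp add: graph_mem_cgraph_from)

theorem lemma4p3:
  fixes g h :: "real \<Rightarrow> real^'d"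
  assumes "BV h" and "cadlag g"
  shows "(integral {0..1} (\<lambda>s. norm (g s - h s))
           \<le> 2 * real CARD('d) * (Var h - norm (h 0) + 1) * rho2 g h
             + pi * real CARD('d) * (rho2 g h)\<^sup>2)
         \<and> (integral {0..1} (\<lambda>s. norm (g s - h s))
           \<le> 2 * real CARD('d) * (Var h + 1) * rho2' g h
             + pi * real CARD('d) * (rho2' g h)\<^sup>2)"
proof -
  let ?I = "integral {0..1} (\<lambda>s. norm (g s - h s))"
  have relax: "?I \<le> 2 * real CARD('d) * a * \<rho> + pi * real CARD('d) * \<rho>\<^sup>2"
    if "?I \<le> 2 * a * \<rho>" "0 \<le> a" "0 \<le> \<rho>" for a \<rho>
  proof -
    have "2 * a * \<rho> \<le> 2 * real CARD('d) * a * \<rho>"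
      using that mult_right_mono[of 1 "real CARD('d)" "2 * a * \<rho>"] by (simp add: algebra_simps)
    moreover have "0 \<le> pi * real CARD('d) * \<rho>\<^sup>2" by simp
    ultimately show ?thesis using that(1) by linarith
  qed
  have Var: "norm (h 0) \<le> Var h" "0 \<le> Var h"
    using norm_le_Var[OF assms(1)] norm_ge_zero order_trans by blast+
  have "0 \<le> hausdist (cgraph_from w g) T" for w T
    using hausdist_nonneg[OF bounded_cgraph_from[OF assms(2)] graph_mem_cgraph_from[of 0]] by simp
  then have "0 \<le> rho2 g h" "0 \<le> rho2' g h"
    unfolding rho2_def rho2'_def cgraph_eq_cgraph_from by simp_all
  moreover have "?I \<le> 2 * (Var h - norm (h 0) + 1) * rho2 g h"
    using integral_le_hausdist_cgraph_from[OF assms, of "h 0" "g 0"]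
    unfolding rho2_def cgraph_eq_cgraph_from by simp
  moreover have "?I \<le> 2 * (Var h + 1) * rho2' g h"
    using integral_le_hausdist_cgraph_from[OF assms, of 0 0]
    unfolding rho2'_def cgraph_eq_cgraph_from by simp
  ultimately show ?thesis using Var by (intro conjI relax) auto
qed

end
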